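(* $\mathsf{AP}(R_4,R_2)=\mathsf{AP}(R_4,R_3)=\mathsf{\Omega(1)}$.
   Context: Tuples in $\{0,1\}^4$ are written as strings $abcd$. The relations $R_1,\dots,R_5\subseteq\{0,1\}^4$ are $R_1=\{0000,1000,0100,1100,1010,0110,1001,0101,0011,1011,0111,1111\}$, $R_2=\{0000,1000,0100,1100,1010,0101,0011,1111\}$, $R_3=\{0000,1100,1010,0101,0011,1011,0111,1111\}$, $R_4=\{0000,1100,1010,0101,0011,1111\}$, $R_5=\{0000,1100,1010,0110,1001,0101,0011,1111\}$. For $R,S\subseteq\{0,1\}^4$, a Boolean function $f\colon\{0,1\}^n\to\{0,1\}$ is analogy-preserving relative to $(R,S)$ if for all $\mathbf{a},\mathbf{b},\mathbf{c},\mathbf{d}\in\{0,1\}^n$ with $(a_i,b_i,c_i,d_i)\in R$ for every $i$ and such that $(f(\mathbf{a}),f(\mathbf{b}),f(\mathbf{c}),x)\in S$ for some $x\in\{0,1\}$, we have $(f(\mathbf{a}),f(\mathbf{b}),f(\mathbf{c}),f(\mathbf{d}))\in S$; $\mathsf{AP}(R,S)$ is the set of all such functions of all arities. $\mathsf{\Omega(1)}$ is the set of all Boolean functions (of all arities) that are constant, a projection, or the negation of a projection. *)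

theory Defs
  imports Main
begin

text \<open>A Boolean function of arity n is a pair (n, f) with f :: bool list \<Rightarrow> bool,
of which only the values on lists of length n matter.\<close>

type_synonym tup4 = "bool \<times> bool \<times> bool \<times> bool"

definition tp :: "nat \<Rightarrow> nat \<Rightarrow> nat \<Rightarrow> nat \<Rightarrow> tup4" where
  "tp a b c d = (a = 1, b = 1, c = 1, d = 1)"

definition R1 :: "tup4 set" where
  "R1 = {tp 0 0 0 0, tp 1 0 0 0, tp 0 1 0 0, tp 1 1 0 0, tp 1 0 1 0, tp 0 1 1 0,
         tp 1 0 0 1, tp 0 1 0 1, tp 0 0 1 1, tp 1 0 1 1, tp 0 1 1 1, tp 1 1 1 1}"

definition R2 :: "tup4 set" where
  "R2 = {tp 0 0 0 0, tp 1 0 0 0, tp 0 1 0 0, tp 1 1 0 0, tp 1 0 1 0, tp 0 1 0 1,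
         tp 0 0 1 1, tp 1 1 1 1}"

definition R3 :: "tup4 set" where
  "R3 = {tp 0 0 0 0, tp 1 1 0 0, tp 1 0 1 0, tp 0 1 0 1, tp 0 0 1 1, tp 1 0 1 1,
         tp 0 1 1 1, tp 1 1 1 1}"

definition R4 :: "tup4 set" where
  "R4 = {tp 0 0 0 0, tp 1 1 0 0, tp 1 0 1 0, tp 0 1 0 1, tp 0 0 1 1, tp 1 1 1 1}"

definition R5 :: "tup4 set" where
  "R5 = {tp 0 0 0 0, tp 1 1 0 0, tp 1 0 1 0, tp 0 1 1 0, tp 1 0 0 1, tp 0 1 0 1,
         tp 0 0 1 1, tp 1 1 1 1}"

definition AP :: "tup4 set \<Rightarrow> tup4 set \<Rightarrow> (nat \<times> (bool list \<Rightarrow> bool)) set" where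
  "AP R S = {(n, f). \<forall>a b c d. length a = n \<and> length b = n \<and> length c = n \<and> length d = n
      \<and> (\<forall>i<n. (a ! i, b ! i, c ! i, d ! i) \<in> R)
      \<and> (\<exists>x. (f a, f b, f c, x) \<in> S)
      \<longrightarrow> (f a, f b, f c, f d) \<in> S}"

definition Omega1 :: "(nat \<times> (bool list \<Rightarrow> bool)) set" where
  "Omega1 = {(n, f).
      (\<exists>v. \<forall>x. length x = n \<longrightarrow> f x = v)
    \<or> (\<exists>i<n. \<forall>x. length x = n \<longrightarrow> f x = x ! i)
    \<or> (\<exists>i<n. \<forall>x. length x = n \<longrightarrow> f x = (\<not> x ! i))}"

end

theory Submission
  imports Defs
begin

text \<open>For \<open>i \<noteq> j\<close>, the four inputs \<open>x, x\<^sup>i, x\<^sup>j, x\<^sup>i\<^sup>j\<close> (flipping coordinates \<open>i\<close>, \<open>j\<close>) are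
coordinatewise in \<open>R\<^sub>4\<close> in two ways, and the two resulting constraints already force
the square of values \<open>(f x, f x\<^sup>i, f x\<^sup>j, f x\<^sup>i\<^sup>j)\<close> into \<open>R\<^sub>4\<close>. Since \<open>R\<^sub>4\<close> has even parity,
whether flipping coordinate \<open>i\<close> changes \<open>f\<close> does not depend on the point; since \<open>R\<^sub>4\<close>
excludes \<open>0110\<close> and \<open>1001\<close>, at most one coordinate is relevant. Conversely these functions preserve analogies
because \<open>R\<^sub>4 \<subseteq> S\<close>, \<open>R\<^sub>4\<close> is closed under negation and \<open>S\<close> contains the constant tuples.\<close>

definition flip :: "nat \<Rightarrow> bool list \<Rightarrow> bool list" where
  "flip i x = x[i := \<not> x ! i]"

lemma length_flip [simp]: "length (flip i x) = length x"
  by (simp add: flip_def)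

lemma flip_flip [simp]: "i < length x \<Longrightarrow> flip i (flip i x) = x"
  by (simp add: flip_def)

lemma flip_commute: "i \<noteq> j \<Longrightarrow> flip i (flip j x) = flip j (flip i x)"
  by (simp add: flip_def list_update_swap)

lemma nth_flip: "flip i x ! k = (if k = i \<and> i < length x then \<not> x ! k else x ! k)"
  by (cases "i < length x") (auto simp: flip_def nth_list_update list_update_beyond)

text \<open>The hybrid argument: walk from \<open>x\<close> to \<open>y\<close> one coordinate at a time.\<close>

lemma eq_if_flip_invariant:
  assumes invariant: "\<And>z j. length z = n \<Longrightarrow> j < n \<Longrightarrow> j \<in> J \<Longrightarrow> g (flip j z) = g z"
    and lengths: "length x = n" "length y = n"
    and agree: "\<And>j. j < n \<Longrightarrow> j \<notin> J \<Longrightarrow> x ! j = y ! j"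
  shows "g x = g y"
proof -
  define hybrid where "hybrid k = map (\<lambda>p. if p < k then y ! p else x ! p) [0..<n]" for k
  have length_hybrid: "length (hybrid k) = n" for k
    by (simp add: hybrid_def)
  have hybrid_Suc: "g (hybrid (Suc k)) = g (hybrid k)" if "k < n" for k
  proof (cases "x ! k = y ! k")
    case True
    have "hybrid (Suc k) = hybrid k"
      by (rule nth_equalityI) (auto simp: hybrid_def length_hybrid True less_Suc_eq)
    then show ?thesis by simp
  next
    case False
    have "hybrid (Suc k) = flip k (hybrid k)"
      by (rule nth_equalityI) (use False in \<open>auto simp: hybrid_def length_hybrid nth_flip less_Suc_eq\<close>)
    then show ?thesis
      using invariant[OF length_hybrid \<open>k < n\<close>] agree[OF \<open>k < n\<close>] False by auto
  qed
  have "hybrid 0 = x"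
    by (rule nth_equalityI) (auto simp: hybrid_def lengths)
  then have "g (hybrid k) = g x" if "k \<le> n" for k
    using that by (induction k) (auto simp: hybrid_Suc)
  moreover have "hybrid n = y"
    by (rule nth_equalityI) (auto simp: hybrid_def lengths)
  ultimately show ?thesis by (metis order_refl)
qed

lemma R4_iff: "(a, b, c, d) \<in> R4 \<longleftrightarrow> (a = b \<and> c = d) \<or> (a = c \<and> b = d)"
  unfolding R4_def tp_def by auto

definition completes :: "tup4 set \<Rightarrow> tup4 \<Rightarrow> bool" where
  "completes S q \<longleftrightarrow> (case q of (a, b, c, d) \<Rightarrow> (\<exists>t. (a, b, c, t) \<in> S) \<longrightarrow> (a, b, c, d) \<in> S)"

lemma AP_iff_completes:
  "(n, f) \<in> AP R S \<longleftrightarrow> (\<forall>a b c d. length a = n \<and> length b = n \<and> length c = n \<and> length d = n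
      \<and> (\<forall>i<n. (a ! i, b ! i, c ! i, d ! i) \<in> R) \<longrightarrow> completes S (f a, f b, f c, f d))"
  by (simp add: AP_def completes_def imp_conjL)

lemma R4_if_completes_R2_R3:
  assumes "S \<in> {R2, R3}" "completes S (a, b, c, d)" "completes S (c, d, a, b)"
  shows "(a, b, c, d) \<in> R4"
  using assms unfolding completes_def insert_iff empty_iff
  by (elim disjE; simp only: R2_def R3_def R4_def tp_def ex_bool_eq;
      cases a; cases b; cases c; cases d) simp_all

definition square :: "(bool list \<Rightarrow> bool) \<Rightarrow> bool list \<Rightarrow> nat \<Rightarrow> nat \<Rightarrow> tup4" where
  "square f x i j = (f x, f (flip i x), f (flip j x), f (flip j (flip i x)))"

lemma AP_R4_completes_square:
  assumes "(n, f) \<in> AP R4 S" "length x = n" "i < n" "j < n" "i \<noteq> j"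
  shows "completes S (square f x i j)"
proof -
  have "\<forall>k<n. (x ! k, flip i x ! k, flip j x ! k, flip j (flip i x) ! k) \<in> R4"
    using assms by (auto simp: nth_flip R4_iff)
  then show ?thesis
    using assms(1,2) unfolding AP_iff_completes square_def by auto
qed

text \<open>The square based at \<open>x\<^sup>j\<close> is the square at \<open>x\<close> with its two rows swapped.\<close>

lemma AP_R4_square_in_R4:
  assumes "(n, f) \<in> AP R4 S" "S \<in> {R2, R3}" "length x = n" "i < n" "j < n" "i \<noteq> j"
  shows "square f x i j \<in> R4"
proof -
  have "completes S (square f x i j)" "completes S (square f (flip j x) i j)"
    using assms(3-6) by (simp_all add: AP_R4_completes_square[OF assms(1)])
  moreover have "square f (flip j x) i j = (f (flip j x), f (flip j (flip i x)), f x, f (flip i x))"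
    using assms(3-6) by (simp add: square_def flip_commute)
  ultimately show ?thesis
    unfolding square_def by (simp add: R4_if_completes_R2_R3[OF assms(2)])
qed

definition sensitive :: "(bool list \<Rightarrow> bool) \<Rightarrow> nat \<Rightarrow> bool list \<Rightarrow> bool" where
  "sensitive f i x \<longleftrightarrow> f (flip i x) \<noteq> f x"

context
  fixes n :: nat and f :: "bool list \<Rightarrow> bool"
  assumes squares_in_R4:
    "\<And>x i j. length x = n \<Longrightarrow> i < n \<Longrightarrow> j < n \<Longrightarrow> i \<noteq> j \<Longrightarrow> square f x i j \<in> R4"
begin

lemma sensitive_independent:
  assumes "i < n" "length x = n" "length y = n"
  shows "sensitive f i x = sensitive f i y"
proof (rule eq_if_flip_invariant[where J = UNIV])
  fix z :: "bool list" and j assume z: "length z = n" and "j < n"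
  show "sensitive f i (flip j z) = sensitive f i z"
  proof (cases "i = j")
    case True
    then show ?thesis using z \<open>j < n\<close> by (auto simp: sensitive_def)
  next
    case False
    then show ?thesis
      using squares_in_R4[OF z \<open>i < n\<close> \<open>j < n\<close> False]
      by (auto simp: sensitive_def square_def R4_iff flip_commute)
  qed
qed (use assms in auto)

lemma sensitive_unique:
  assumes "i < n" "j < n" "length x = n" "sensitive f i x" "sensitive f j x"
  shows "i = j"
proof (rule ccontr)
  assume "i \<noteq> j"
  have "sensitive f j (flip i x)"
    using sensitive_independent[of j x "flip i x"] assms by simp
  then show False
    using squares_in_R4[OF assms(3,1,2) \<open>i \<noteq> j\<close>] assms(4,5)
    by (auto simp: sensitive_def square_def R4_iff)
qed

lemma Omega1_if_squares_in_R4: "(n, f) \<in> Omega1"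
proof -
  define z where "z = replicate n False"
  have length_z: "length z = n"
    by (simp add: z_def)
  show ?thesis
  proof (cases "\<exists>i<n. sensitive f i z")
    case False
    have "f x = f z" if "length x = n" for x
      by (rule eq_if_flip_invariant[where J = UNIV])
        (use False sensitive_independent length_z that in \<open>auto simp: sensitive_def\<close>)
    then show ?thesis unfolding Omega1_def by auto
  next
    case True
    then obtain i where i: "i < n" "sensitive f i z" by blast
    have f_eq: "f x = f (z[i := x ! i])" if "length x = n" for x
    proof (rule eq_if_flip_invariant[where J = "- {i}"])
      fix y :: "bool list" and j assume y: "length y = n" and "j < n" "j \<in> - {i}"
      then have "\<not> sensitive f j y"
        using sensitive_unique[of i j y] sensitive_independent[OF i(1) length_z y] i by auto
      then show "f (flip j y) = f y" by (simp add: sensitive_def)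
    qed (use that length_z i in auto)
    have "z[i := True] = flip i z" "z[i := False] = z"
      using i(1) by (simp_all add: flip_def z_def list_update_same_conv)
    then have "f x = (f z \<noteq> x ! i)" if "length x = n" for x
      using f_eq[OF that] i(2) by (cases "x ! i") (auto simp: sensitive_def)
    then show ?thesis unfolding Omega1_def using i(1) by (cases "f z") auto
  qed
qed

end

lemma Omega1_subset_AP:
  assumes "R \<subseteq> S"
    and negation: "\<And>a b c d. (a, b, c, d) \<in> R \<Longrightarrow> (\<not> a, \<not> b, \<not> c, \<not> d) \<in> S"
    and constants: "\<And>v. (v, v, v, v) \<in> S"
  shows "Omega1 \<subseteq> AP R S"
proof safe
  fix n f assume "(n, f) \<in> Omega1"
  then consider v where "\<And>x. length x = n \<Longrightarrow> f x = v"
    | i where "i < n" "\<And>x. length x = n \<Longrightarrow> f x = x ! i"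
    | i where "i < n" "\<And>x. length x = n \<Longrightarrow> f x = (\<not> x ! i)"
    unfolding Omega1_def by auto
  note f_cases = this
  show "(n, f) \<in> AP R S"
    unfolding AP_iff_completes
  proof (intro allI impI, elim conjE)
    fix a b c d :: "bool list"
    assume "length a = n" "length b = n" "length c = n" "length d = n"
      "\<forall>i<n. (a ! i, b ! i, c ! i, d ! i) \<in> R"
    with f_cases have "(f a, f b, f c, f d) \<in> S"
      by cases (use constants negation \<open>R \<subseteq> S\<close> in auto)
    then show "completes S (f a, f b, f c, f d)"
      by (simp add: completes_def)
  qed
qed

lemma AP_R4_eq_Omega1:
  assumes "S \<in> {R2, R3}"
  shows "AP R4 S = Omega1"
proof
  show "AP R4 S \<subseteq> Omega1"
    using AP_R4_square_in_R4[OF _ assms] Omega1_if_squares_in_R4 by auto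
  show "Omega1 \<subseteq> AP R4 S"
  proof (rule Omega1_subset_AP)
    show R4_subset: "R4 \<subseteq> S"
      using assms unfolding R2_def R3_def R4_def by auto
    show "(\<not> a, \<not> b, \<not> c, \<not> d) \<in> S" if "(a, b, c, d) \<in> R4" for a b c d
      using that R4_subset by (auto simp: R4_iff)
    show "(v, v, v, v) \<in> S" for v
      using assms by (cases v) (auto simp: R2_def R3_def tp_def)
  qed
qed

theorem mainTheorem15:
  shows "AP R4 R2 = Omega1 \<and> AP R4 R3 = Omega1"
  using AP_R4_eq_Omega1 by simp

end
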